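(* Let $W:\mathbb R\to\mathbb R$ be odd and continuously differentiable with $W'(0)>0$ and $W(x)>0$ for all $x>0$. Let $g\ge0$ be a (sufficiently regular, sufficiently fast decaying) solution of $\partial_tg=\partial_x\big((W*g)g\big)$ on $[0,\infty)\times\mathbb R$, where $(W*g)(x)=\int_{\mathbb R}W(x-y)g(y)dy$, with $\operatorname{supp}g(0,\cdot)\subset[a,b]$. Then $\operatorname{supp}g(t,\cdot)\subset[a,b]$ for all $t>0$, and, with $m=\|g(0,\cdot)\|_1$ and $c$ defined by $mc=\int_{\mathbb R}xg(0,x)dx$, $$\lim_{t\to\infty}\int_{\mathbb R}h(x)g(t,x)\,dx=m\,h(c)$$ for every twice continuously differentiable $h:\mathbb R\to\mathbb R$. *)

theory Defs
  imports "HOL-Analysis.Analysis"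
begin

definition conv_W :: "(real \<Rightarrow> real) \<Rightarrow> (real \<Rightarrow> real) \<Rightarrow> real \<Rightarrow> real" where
  "conv_W W f x = integral UNIV (\<lambda>y. W (x - y) * f y)"

end

theory Submission
  imports Defs "HOL-Real_Asymp.Real_Asymp"
begin

(* The whole argument is driven by the weak formulation: for a test function phi,
     d/dt  Int phi g_t  =  -1/2  Int Int (phi' x - phi' y) W(x - y) g_t(x) g_t(y) dx dy,
   obtained by differentiating under the integral, integrating the flux by parts, and
   symmetrising with the oddness of W.  Since (phi' x - phi' y) W(x - y) >= 0 whenever phi' is
   monotone, such moments are non-increasing; affine phi gives conservation of mass m and of
   the centre of mass c, and phi = ((x - b)_+)^2, ((a - x)_+)^2 confines the support to [a,b].
   On [a,b] - [a,b] the kernel is coercive, z W(z) >= kappa z^2, so the inertia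
   I(t) = Int (x - c)^2 g_t satisfies I' <= -2 kappa m I and decays exponentially (Gronwall).
   A second-order Taylor bound |h x - h c - h'(c)(x - c)| <= M (x - c)^2 finally gives
   |Int h g_t - m h(c)| <= M I(t) -> 0. *)

text \<open>The continuous
  extension of \<open>W z / z\<close> by \<open>W' 0\<close> attains a positive minimum on \<open>[0, L]\<close>.\<close>
lemma odd_kernel_coercive:
  fixes W :: "real \<Rightarrow> real"
  assumes W_odd: "\<And>x. W (- x) = - W x"
    and W_diff: "\<And>x. W differentiable (at x)"
    and W'_pos: "deriv W 0 > 0"
    and W_pos: "\<And>x. x > 0 \<Longrightarrow> W x > 0"
    and L: "0 \<le> L"
  obtains \<kappa> where "\<kappa> > 0" "\<And>z. \<bar>z\<bar> \<le> L \<Longrightarrow> \<kappa> * z\<^sup>2 \<le> z * W z"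
proof -
  define q where "q z = (if z = 0 then deriv W 0 else W z / z)" for z
  have W0: "W 0 = 0" using W_odd[of 0] by simp
  have q_cont: "isCont q z" for z
  proof (cases "z = 0")
    case True
    have "(W has_real_derivative deriv W 0) (at 0)"
      using W_diff[of 0] by (simp add: DERIV_deriv_iff_real_differentiable)
    then have "((\<lambda>y. W y / y) \<longlongrightarrow> q 0) (at 0)"
      using W0 by (simp add: has_field_derivative_iff q_def)
    then have "(q \<longlongrightarrow> q 0) (at 0)"
      by (rule tendsto_cong[THEN iffD1, rotated]) (auto simp: q_def eventually_at_filter)
    then show ?thesis using True by (simp add: isCont_def)
  next
    case False
    have cont: "isCont (\<lambda>y. W y / y) z"
      using W_diff[of z] False by (auto intro!: continuous_intros differentiable_imp_continuous_within)
    have "\<forall>\<^sub>F y in nhds z. y \<noteq> 0"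
      using False by (simp add: t1_space_nhds)
    then have "\<forall>\<^sub>F y in nhds z. W y / y = q y"
      by eventually_elim (simp add: q_def)
    then show ?thesis using cont isCont_cong by metis
  qed
  obtain z0 where z0: "z0 \<in> {0..L}" "\<And>z. z \<in> {0..L} \<Longrightarrow> q z0 \<le> q z"
    using continuous_attains_inf[of "{0..L}" q] L q_cont by (auto simp: continuous_at_imp_continuous_on)
  have q_pos: "q z0 > 0" using W_pos[of z0] W'_pos z0(1) by (auto simp: q_def)
  have right: "q z0 * z\<^sup>2 \<le> z * W z" if "0 \<le> z" "z \<le> L" for z
  proof (cases "z = 0")
    case False
    have "q z0 * z\<^sup>2 \<le> W z / z * z\<^sup>2"
      using z0(2)[of z] that False by (intro mult_right_mono) (auto simp: q_def)
    also have "\<dots> = z * W z" using False by (simp add: power2_eq_square)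
    finally show ?thesis .
  qed simp
  show thesis
  proof (rule that[OF q_pos])
    fix z :: real assume "\<bar>z\<bar> \<le> L"
    then show "q z0 * z\<^sup>2 \<le> z * W z"
      using right[of z] right[of "- z"] W_odd[of z] by (cases "z \<ge> 0") auto
  qed
qed

lemma taylor_quadratic_bound:
  fixes h :: "real \<Rightarrow> real"
  assumes h1: "\<And>x. h differentiable (at x)" and h2: "\<And>x. deriv h differentiable (at x)"
    and h3: "continuous_on UNIV (deriv (deriv h))"
  obtains M where "M \<ge> 0"
    "\<And>x c. x \<in> {a..b} \<Longrightarrow> c \<in> {a..b} \<Longrightarrow> \<bar>h x - h c - deriv h c * (x - c)\<bar> \<le> M * (x - c)\<^sup>2"
proof -
  have "bounded (deriv (deriv h) ` {a..b})"
    by (intro compact_imp_bounded compact_continuous_image continuous_on_subset[OF h3]) auto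
  then obtain M0 where M0: "\<And>s. s \<in> {a..b} \<Longrightarrow> \<bar>deriv (deriv h) s\<bar> \<le> M0"
    unfolding bounded_real by (meson image_eqI)
  define M where "M = max M0 0"
  have M: "\<And>s. s \<in> {a..b} \<Longrightarrow> \<bar>deriv (deriv h) s\<bar> \<le> M" "M \<ge> 0"
    using M0 by (force simp: M_def)+
  have dh: "(h has_real_derivative deriv h x) (at x within S)" for x S
    using h1 by (simp add: DERIV_deriv_iff_real_differentiable has_field_derivative_at_within)
  have ddh: "(deriv h has_real_derivative deriv (deriv h) x) (at x within S)" for x S
    using h2 by (simp add: DERIV_deriv_iff_real_differentiable has_field_derivative_at_within)
  have h'_lipschitz: "\<bar>deriv h s - deriv h c\<bar> \<le> M * \<bar>s - c\<bar>" if "s \<in> {a..b}" "c \<in> {a..b}" for s c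
    using field_differentiable_bound[of "{a..b}" "deriv h" "deriv (deriv h)" M s c] that M
    by (auto simp: ddh)
  show thesis
  proof (rule that[OF M(2)])
    fix x c assume x: "x \<in> {a..b}" and c: "c \<in> {a..b}"
    define F where "F y = h y - h c - deriv h c * (y - c)" for y
    define S where "S = {min c x..max c x}"
    have "S \<subseteq> {a..b}" using x c by (auto simp: S_def)
    have dF: "(F has_real_derivative deriv h y - deriv h c) (at y within S)" for y
      unfolding F_def[abs_def] by (auto intro!: derivative_eq_intros dh)
    have bF: "norm (deriv h y - deriv h c) \<le> M * \<bar>x - c\<bar>" if "y \<in> S" for y
    proof -
      have "M * \<bar>y - c\<bar> \<le> M * \<bar>x - c\<bar>" using that M(2) by (intro mult_left_mono) (auto simp: S_def)
      then show ?thesis using h'_lipschitz[of y c] that \<open>S \<subseteq> {a..b}\<close> c by auto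
    qed
    have "norm (F x - F c) \<le> M * \<bar>x - c\<bar> * norm (x - c)"
      by (rule field_differentiable_bound[of S F _ "M * \<bar>x - c\<bar>"])
         (use dF bF in \<open>auto simp: S_def convex_real_interval\<close>)
    then show "\<bar>h x - h c - deriv h c * (x - c)\<bar> \<le> M * (x - c)\<^sup>2"
      by (simp add: F_def power2_eq_square abs_mult)
  qed
qed

lemma nonpos_derivative_imp_decreasing:
  fixes Q :: "real \<Rightarrow> real"
  assumes T: "0 \<le> T"
    and Q_deriv: "\<And>t. t \<in> {0..T} \<Longrightarrow> (Q has_real_derivative Q' t) (at t within {0..T})"
    and Q'_nonpos: "\<And>t. t \<in> {0..T} \<Longrightarrow> Q' t \<le> 0"
  shows "Q T \<le> Q 0"
proof (rule DERIV_nonpos_imp_decreasing_open[OF T])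
  show "continuous_on {0..T} Q"
    using Q_deriv DERIV_continuous continuous_on_eq_continuous_within by blast
  fix x assume x: "0 < x" "x < T"
  have "at x within {0..T} = at x"
    by (rule at_within_interior) (use x in simp)
  then show "\<exists>y. (Q has_real_derivative y) (at x) \<and> y \<le> 0"
    using Q_deriv[of x] Q'_nonpos[of x] x by auto
qed

lemma gronwall_decay:
  fixes Q :: "real \<Rightarrow> real"
  assumes T: "0 \<le> T"
    and Q_deriv: "\<And>t. t \<in> {0..T} \<Longrightarrow> (Q has_real_derivative Q' t) (at t within {0..T})"
    and Q'_le: "\<And>t. t \<in> {0..T} \<Longrightarrow> Q' t \<le> - k * Q t"
  shows "Q T \<le> Q 0 * exp (- k * T)"
proof -
  have "Q T * exp (k * T) \<le> Q 0 * exp (k * 0)"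
  proof (rule nonpos_derivative_imp_decreasing[OF T])
    fix t assume t: "t \<in> {0..T}"
    show "((\<lambda>s. Q s * exp (k * s)) has_real_derivative Q' t * exp (k * t) + exp (k * t) * k * Q t)
        (at t within {0..T})"
      by (rule DERIV_mult[OF Q_deriv[OF t], THEN DERIV_cong]) (auto intro!: derivative_eq_intros)
    have "exp (k * t) * (Q' t + k * Q t) \<le> 0"
      using Q'_le[OF t] by (simp add: mult_le_0_iff)
    then show "Q' t * exp (k * t) + exp (k * t) * k * Q t \<le> 0"
      by (simp add: algebra_simps)
  qed
  then show ?thesis by (simp add: exp_minus field_simps)
qed

text \<open>The square of the positive part is \<open>C\<^sup>1\<close>; it generates the confining test functions.\<close>
lemma positive_part_square_deriv:
  "((\<lambda>z::real. (max z 0)\<^sup>2) has_real_derivative 2 * max z 0) (at z)"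
proof -
  consider "z > 0" | "z < 0" | "z = 0" by linarith
  then show ?thesis
  proof cases
    case 1
    have "((\<lambda>z::real. z\<^sup>2) has_real_derivative 2 * max z 0) (at z)"
      using 1 by (auto intro!: derivative_eq_intros)
    then show ?thesis
      by (rule has_field_derivative_transform_within_open[where S="{0<..}"]) (use 1 in auto)
  next
    case 2
    have "((\<lambda>z::real. 0) has_real_derivative 2 * max z 0) (at z)" using 2 by simp
    then show ?thesis
      by (rule has_field_derivative_transform_within_open[where S="{..<0}"]) (use 2 in auto)
  next
    case 3
    have "((\<lambda>y. ((max y 0)\<^sup>2 - (max 0 0)\<^sup>2) / (y - 0)) \<longlongrightarrow> (0::real)) (at 0)"
    proof (rule Lim_null_comparison)
      show "\<forall>\<^sub>F x in at 0. norm (((max x 0)\<^sup>2 - (max 0 0)\<^sup>2) / (x - 0)) \<le> \<bar>x\<bar>"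
        by (rule always_eventually) (auto simp: power2_eq_square abs_mult max_def)
      show "((\<lambda>x::real. \<bar>x\<bar>) \<longlongrightarrow> 0) (at 0)"
        using tendsto_rabs[OF tendsto_ident_at[of 0 UNIV]] by simp
    qed
    then show ?thesis using 3 by (simp add: has_field_derivative_iff)
  qed
qed


lemma integral_compact_support:
  fixes f :: "real \<Rightarrow> real"
  assumes "continuous_on {-R..R} f" "\<And>x. R \<le> \<bar>x\<bar> \<Longrightarrow> f x = 0"
  shows "f integrable_on UNIV" "integral UNIV f = integral {-R..R} f"
proof -
  have "(f has_integral integral {-R..R} f) {-R..R}"
    using integrable_continuous_real[OF assms(1)] by blast
  then have "(f has_integral integral {-R..R} f) UNIV"
    by (rule has_integral_on_superset) (use assms(2) in auto)
  then show "f integrable_on UNIV" "integral UNIV f = integral {-R..R} f"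
    by (auto simp: integral_unique)
qed

lemma integral_zero_imp_zero:
  fixes f :: "real \<Rightarrow> real"
  assumes "continuous_on {-R..R} f" "\<And>x. 0 \<le> f x" "integral {-R..R} f = 0" "R > 0" "\<bar>x\<bar> \<le> R"
  shows "f x = 0"
proof (rule has_integral_0_cbox_imp_0[of "-R" R f])
  show "continuous_on (cbox (- R) R) f" using assms by (simp add: cbox_interval)
  show "(f has_integral 0) (cbox (- R) R)"
    using assms integrable_continuous_real[OF assms(1)] by (metis cbox_interval integrable_integral)
qed (use assms in \<open>auto simp: cbox_interval\<close>)

lemma continuous_on_section:
  fixes F :: "real \<Rightarrow> real \<Rightarrow> real"
  assumes "continuous_on UNIV (\<lambda>(x, y). F x y)"
  shows "continuous_on S (F x)"
proof -
  have "continuous_on UNIV ((\<lambda>(x, y). F x y) \<circ> (\<lambda>y. (x, y)))"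
    by (intro continuous_on_compose continuous_intros continuous_on_subset[OF assms]) auto
  then show ?thesis by (auto simp: o_def elim: continuous_on_subset)
qed

lemma parametric_integral_continuous:
  fixes F :: "real \<Rightarrow> real \<Rightarrow> real"
  assumes "continuous_on UNIV (\<lambda>(x, y). F x y)"
  shows "continuous_on S (\<lambda>x. integral {a..b} (F x))"
proof -
  have "continuous_on UNIV (\<lambda>x. integral (cbox a b) (F x))"
    by (rule integral_continuous_on_param) (use assms in \<open>auto intro: continuous_on_subset\<close>)
  then show ?thesis by (auto simp: cbox_interval intro: continuous_on_subset)
qed

lemma double_integral_mono:
  fixes F G :: "real \<Rightarrow> real \<Rightarrow> real"
  assumes "continuous_on UNIV (\<lambda>(x, y). F x y)" "continuous_on UNIV (\<lambda>(x, y). G x y)"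
    and "\<And>x y. F x y \<le> G x y"
  shows "integral {a..b} (\<lambda>x. integral {a..b} (F x)) \<le> integral {a..b} (\<lambda>x. integral {a..b} (G x))"
  by (intro integral_le integrable_continuous_real parametric_integral_continuous
      continuous_on_section assms)

text \<open>Symmetrisation: against an antisymmetric kernel \<open>K\<close>, the double integral of
  \<open>(\<psi> x - \<psi> y) K x y\<close> is twice that of \<open>\<psi> x K x y\<close> (Fubini and a change of variables).\<close>
lemma antisymmetric_double_integral:
  fixes K :: "real \<Rightarrow> real \<Rightarrow> real" and \<psi> :: "real \<Rightarrow> real"
  assumes K_cont: "continuous_on UNIV (\<lambda>(x, y). K x y)" and \<psi>_cont: "continuous_on UNIV \<psi>"
    and K_anti: "\<And>x y. K y x = - K x y"
  shows "integral {a..b} (\<lambda>x. integral {a..b} (\<lambda>y. (\<psi> x - \<psi> y) * K x y))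
       = 2 * integral {a..b} (\<lambda>x. integral {a..b} (\<lambda>y. \<psi> x * K x y))"
proof -
  have K: "continuous_on S (\<lambda>p. K (fst p) (snd p))" for S
    using K_cont by (auto simp: split_beta elim: continuous_on_subset)
  have \<psi>: "continuous_on S (\<lambda>p. \<psi> (f p))" if "continuous_on S f" for S and f :: "real \<times> real \<Rightarrow> real"
    by (rule continuous_on_compose2[OF \<psi>_cont that]) auto
  have left: "continuous_on UNIV (\<lambda>(x, y). \<psi> x * K x y)"
    and right: "continuous_on UNIV (\<lambda>(x, y). \<psi> y * K x y)"
    by (simp_all add: split_beta) (intro continuous_intros \<psi> K)+
  have inner_integrable: "(\<lambda>y. \<psi> x * K x y) integrable_on {a..b}" "(\<lambda>y. \<psi> y * K x y) integrable_on {a..b}"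
    for x using continuous_on_section[OF left, of _ x] continuous_on_section[OF right, of _ x]
    by (auto intro: integrable_continuous_real)
  have swap: "integral {a..b} (\<lambda>x. integral {a..b} (\<lambda>y. \<psi> y * K x y))
      = - integral {a..b} (\<lambda>x. integral {a..b} (\<lambda>y. \<psi> x * K x y))"
  proof -
    have "integral {a..b} (\<lambda>x. integral {a..b} (\<lambda>y. \<psi> y * K x y))
        = integral {a..b} (\<lambda>y. integral {a..b} (\<lambda>x. \<psi> y * K x y))"
      using integral_swap_continuous[of a a b b "\<lambda>x y. \<psi> y * K x y",
          OF continuous_on_subset[OF right subset_UNIV]]
      by (simp only: cbox_interval)
    also have "\<dots> = integral {a..b} (\<lambda>y. integral {a..b} (\<lambda>x. - (\<psi> y * K y x)))"
      by (intro integral_cong) (metis K_anti mult_minus_right)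
    finally show ?thesis by simp
  qed
  have "integral {a..b} (\<lambda>x. integral {a..b} (\<lambda>y. (\<psi> x - \<psi> y) * K x y))
      = integral {a..b} (\<lambda>x. integral {a..b} (\<lambda>y. \<psi> x * K x y) - integral {a..b} (\<lambda>y. \<psi> y * K x y))"
    by (intro integral_cong)
       (simp add: left_diff_distrib integral_diff[OF inner_integrable] del: integral_mult_left)
  also have "\<dots> = integral {a..b} (\<lambda>x. integral {a..b} (\<lambda>y. \<psi> x * K x y))
      - integral {a..b} (\<lambda>x. integral {a..b} (\<lambda>y. \<psi> y * K x y))"
    by (intro integral_diff integrable_continuous_real parametric_integral_continuous left right)
  finally show ?thesis using swap by simp
qed

text \<open>Expanding \<open>(x - y)\<^sup>2 = (x - c)\<^sup>2 - 2 (x - c)(y - c) + (y - c)\<^sup>2\<close> expresses the pair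
  interaction \<open>\<integral>\<integral> (x - y)\<^sup>2 f x f y\<close> through mass, first and second moments about \<open>c\<close>.\<close>
lemma pair_variance_identity:
  fixes f :: "real \<Rightarrow> real"
  assumes fc: "continuous_on {-R..R} f"
  shows "integral {-R..R} (\<lambda>x. integral {-R..R} (\<lambda>y. (x - y)\<^sup>2 * (f x * f y)))
     = 2 * integral {-R..R} f * integral {-R..R} (\<lambda>x. (x - c)\<^sup>2 * f x)
       - 2 * (integral {-R..R} (\<lambda>x. (x - c) * f x))\<^sup>2"
proof -
  define m where "m = integral {-R..R} f"
  define N where "N = integral {-R..R} (\<lambda>x. (x - c) * f x)"
  define I where "I = integral {-R..R} (\<lambda>x. (x - c)\<^sup>2 * f x)"
  have int: "(\<lambda>x. k * f x) integrable_on {-R..R}" "(\<lambda>x. k * ((x - c) * f x)) integrable_on {-R..R}"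
    "(\<lambda>x. k * ((x - c)\<^sup>2 * f x)) integrable_on {-R..R}" for k
    by (intro integrable_continuous_real continuous_intros fc)+
  have inner: "integral {-R..R} (\<lambda>y. (x - y)\<^sup>2 * (f x * f y))
      = (x - c)\<^sup>2 * f x * m - 2 * (x - c) * f x * N + f x * I" for x
  proof -
    have "integral {-R..R} (\<lambda>y. (x - y)\<^sup>2 * (f x * f y))
      = integral {-R..R} (\<lambda>y. ((x - c)\<^sup>2 * f x) * f y - (2 * (x - c) * f x) * ((y - c) * f y)
            + f x * ((y - c)\<^sup>2 * f y))"
      by (rule integral_cong) (simp add: power2_eq_square algebra_simps)
    then show ?thesis
      by (simp add: integral_add integral_diff integrable_diff int m_def N_def I_def)
  qed
  have outer: "integral {-R..R} (\<lambda>x. (x - c)\<^sup>2 * f x * m - 2 * (x - c) * f x * N + f x * I)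
      = I * m - 2 * N * N + m * I"
  proof -
    have "(\<lambda>x. (x - c)\<^sup>2 * f x * m - 2 * (x - c) * f x * N + f x * I)
        = (\<lambda>x. m * ((x - c)\<^sup>2 * f x) - (2 * N) * ((x - c) * f x) + I * f x)"
      by (auto simp: algebra_simps)
    then show ?thesis
      by (simp add: integral_add integral_diff integrable_diff int m_def N_def I_def)
  qed
  show ?thesis
    by (simp only: inner outer) (simp add: m_def N_def I_def power2_eq_square algebra_simps)
qed


locale aggregation_solution =
  fixes W :: "real \<Rightarrow> real" and g gt :: "real \<Rightarrow> real \<Rightarrow> real"
  assumes W_odd: "\<And>x. W (- x) = - W x"
    and W_cont: "continuous_on UNIV W"
    and W_pos: "\<And>x. x > 0 \<Longrightarrow> W x > 0"
    and g_nonneg: "\<And>t x. t \<ge> 0 \<Longrightarrow> g t x \<ge> 0"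
    and g_dt: "\<And>t x. t \<ge> 0 \<Longrightarrow> ((\<lambda>s. g s x) has_real_derivative gt t x) (at t within {0..})"
    and g_cont: "continuous_on ({0..} \<times> UNIV) (\<lambda>(t, x). g t x)"
    and gt_cont: "continuous_on ({0..} \<times> UNIV) (\<lambda>(t, x). gt t x)"
    and g_decay: "\<And>T. \<exists>R. \<forall>t x. 0 \<le> t \<and> t \<le> T \<and> \<bar>x\<bar> > R \<longrightarrow> g t x = 0"
    and pde: "\<And>t x. t \<ge> 0 \<Longrightarrow>
               ((\<lambda>y. conv_W W (g t) y * g t y) has_real_derivative gt t x) (at x)"
begin

lemma W_comp_continuous [continuous_intros]:
  "continuous_on S f \<Longrightarrow> continuous_on S (\<lambda>z. W (f z))"
  by (rule continuous_on_compose2[OF W_cont]) auto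

text \<open>\<open>W\<close> has the sign of its argument, so \<open>W (x - y)\<close> has the sign of \<open>\<psi> x - \<psi> y\<close>
  for every monotone \<open>\<psi>\<close>; this is what makes the interaction dissipative.\<close>
lemma monotone_weight_nonneg:
  assumes "mono \<psi>"
  shows "0 \<le> (\<psi> x - \<psi> y) * W (x - y)"
proof (cases "x < y")
  case True
  then have "W (x - y) < 0" using W_pos[of "y - x"] W_odd[of "y - x"] by simp
  moreover have "\<psi> x \<le> \<psi> y" using assms True by (simp add: mono_def)
  ultimately show ?thesis by (simp add: mult_nonpos_nonpos)
next
  case False
  then have "W (x - y) \<ge> 0" using W_pos[of "x - y"] W_odd[of 0] by (cases "x = y") auto
  moreover have "\<psi> y \<le> \<psi> x" using assms False by (simp add: mono_def)
  ultimately show ?thesis by simp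
qed

lemma support_radius:
  obtains R where "R > 0" "\<And>t x. 0 \<le> t \<Longrightarrow> t \<le> T \<Longrightarrow> R \<le> \<bar>x\<bar> \<Longrightarrow> g t x = 0"
proof -
  obtain R0 where R0: "\<forall>t x. 0 \<le> t \<and> t \<le> T \<and> \<bar>x\<bar> > R0 \<longrightarrow> g t x = 0"
    using g_decay by blast
  show thesis
  proof (rule that[of "\<bar>R0\<bar> + 1"])
    fix t x :: real assume "0 \<le> t" "t \<le> T" "\<bar>R0\<bar> + 1 \<le> \<bar>x\<bar>"
    then show "g t x = 0" using R0 by auto
  qed simp
qed

lemma g_slice_continuous:
  assumes t: "t \<ge> 0" and f: "continuous_on S f"
  shows "continuous_on S (\<lambda>z. g t (f z))"
proof -
  have "continuous_on UNIV ((\<lambda>(t, x). g t x) \<circ> (\<lambda>x. (t, x)))"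
    by (rule continuous_on_compose[OF _ continuous_on_subset[OF g_cont]])
       (use t in \<open>auto intro!: continuous_intros\<close>)
  then show ?thesis
    using continuous_on_compose2[OF _ f, of UNIV "g t"] by (auto simp: o_def)
qed

lemma moment_on_window:
  assumes t: "t \<ge> 0" and R: "\<And>x. R \<le> \<bar>x\<bar> \<Longrightarrow> g t x = 0" and \<phi>: "continuous_on UNIV \<phi>"
  shows "(\<lambda>x. \<phi> x * g t x) integrable_on UNIV"
    "integral UNIV (\<lambda>x. \<phi> x * g t x) = integral {-R..R} (\<lambda>x. \<phi> x * g t x)"
proof -
  have "continuous_on {-R..R} (\<lambda>x. \<phi> x * g t x)"
    by (intro continuous_intros g_slice_continuous t continuous_on_subset[OF \<phi> subset_UNIV])
  then show "(\<lambda>x. \<phi> x * g t x) integrable_on UNIV"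
    "integral UNIV (\<lambda>x. \<phi> x * g t x) = integral {-R..R} (\<lambda>x. \<phi> x * g t x)"
    using integral_compact_support[of R "\<lambda>x. \<phi> x * g t x"] R by auto
qed

lemma moment_integrable:
  assumes "t \<ge> 0" "continuous_on UNIV \<phi>"
  shows "(\<lambda>x. \<phi> x * g t x) integrable_on UNIV"
proof (rule support_radius[of t])
  fix R assume R: "\<And>s x. 0 \<le> s \<Longrightarrow> s \<le> t \<Longrightarrow> R \<le> \<bar>x\<bar> \<Longrightarrow> g s x = 0"
  show ?thesis by (rule moment_on_window(1)[OF assms(1) _ assms(2)]) (use R assms(1) in auto)
qed

lemma slice_integrable: "t \<ge> 0 \<Longrightarrow> g t integrable_on UNIV"
  using moment_integrable[of t "\<lambda>_. 1"] by simp

lemma conv_on_window: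
  assumes "t \<ge> 0" "\<And>y. R \<le> \<bar>y\<bar> \<Longrightarrow> g t y = 0"
  shows "conv_W W (g t) x = integral {-R..R} (\<lambda>y. W (x - y) * g t y)"
  unfolding conv_W_def
proof (rule integral_compact_support(2))
  show "continuous_on {-R..R} (\<lambda>y. W (x - y) * g t y)"
    by (intro continuous_intros g_slice_continuous assms(1))
qed (use assms(2) in auto)

lemma conv_continuous:
  assumes "t \<ge> 0" "\<And>y. R \<le> \<bar>y\<bar> \<Longrightarrow> g t y = 0"
  shows "continuous_on S (conv_W W (g t))"
proof -
  have "continuous_on S (\<lambda>x. integral {-R..R} (\<lambda>y. W (x - y) * g t y))"
    by (rule parametric_integral_continuous)
       (simp add: split_beta, intro continuous_intros g_slice_continuous assms(1))
  then show ?thesis using conv_on_window[OF assms] by simp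
qed

definition dissipation :: "(real \<Rightarrow> real) \<Rightarrow> real \<Rightarrow> real \<Rightarrow> real" where
  "dissipation \<psi> R t = integral {-R..R} (\<lambda>x. integral {-R..R}
      (\<lambda>y. (\<psi> x - \<psi> y) * (W (x - y) * g t x * g t y)))"

lemma interaction_continuous:
  assumes "t \<ge> 0"
  shows "continuous_on UNIV (\<lambda>(x, y). W (x - y) * g t x * g t y)"
  by (simp add: split_beta) (intro continuous_intros g_slice_continuous assms)

lemma dissipation_nonneg:
  assumes "mono \<psi>" "continuous_on UNIV \<psi>" "t \<ge> 0"
  shows "0 \<le> dissipation \<psi> R t"
proof -
  have "0 \<le> (\<psi> x - \<psi> y) * (W (x - y) * g t x * g t y)" for x y
    using monotone_weight_nonneg[OF assms(1), of x y] g_nonneg[OF assms(3)]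
    by (metis mult.assoc mult_nonneg_nonneg)
  then have "integral {-R..R} (\<lambda>x. integral {-R..R} (\<lambda>y. 0)) \<le> dissipation \<psi> R t"
    unfolding dissipation_def using assms(2,3)
    by (intro double_integral_mono)
       (auto simp: split_beta intro!: continuous_intros g_slice_continuous
         continuous_on_compose2[OF assms(2)])
  then show ?thesis by simp
qed

lemma window_moment_has_derivative:
  assumes \<phi>: "continuous_on UNIV \<phi>" and t: "t \<in> {0..T}"
  shows "((\<lambda>s. integral {-R..R} (\<lambda>x. \<phi> x * g s x)) has_real_derivative
           integral {-R..R} (\<lambda>x. \<phi> x * gt t x)) (at t within {0..T})"
proof -
  have "((\<lambda>s. integral (cbox (-R) R) (\<lambda>x. \<phi> x * g s x)) has_real_derivative
       integral (cbox (-R) R) (\<lambda>x. \<phi> x * gt t x)) (at t within {0..T})"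
  proof (rule leibniz_rule_field_derivative[where fx="\<lambda>s x. \<phi> x * gt s x"])
    fix s x assume s: "s \<in> {0..T}"
    show "((\<lambda>s. \<phi> x * g s x) has_real_derivative \<phi> x * gt s x) (at s within {0..T})"
      by (rule DERIV_cmult, rule DERIV_subset[OF g_dt]) (use s in auto)
    show "(\<lambda>x. \<phi> x * g s x) integrable_on cbox (- R) R"
      by (rule integrable_continuous)
         (use s in \<open>auto intro!: continuous_intros g_slice_continuous continuous_on_subset[OF \<phi>]\<close>)
  next
    have "continuous_on ({0..T} \<times> cbox (-R) R) (\<lambda>p. \<phi> (snd p) * (\<lambda>(s, x). gt s x) p)"
      by (intro continuous_intros continuous_on_compose2[OF \<phi>] continuous_on_subset[OF gt_cont]) auto
    then show "continuous_on ({0..T} \<times> cbox (- R) R) (\<lambda>(s, x). \<phi> x * gt s x)"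
      by (simp add: split_beta)
  qed (use t in \<open>auto simp: convex_real_interval\<close>)
  then show ?thesis by (simp add: cbox_interval)
qed

text \<open>Integrating the flux by parts: the boundary terms vanish outside the support.\<close>
lemma flux_by_parts:
  assumes t: "t \<ge> 0" and R: "R > 0" "\<And>x. R \<le> \<bar>x\<bar> \<Longrightarrow> g t x = 0"
    and \<phi>: "\<And>x. (\<phi> has_real_derivative \<phi>' x) (at x)" and \<phi>': "continuous_on UNIV \<phi>'"
  shows "integral {-R..R} (\<lambda>x. \<phi> x * gt t x)
       = - integral {-R..R} (\<lambda>x. conv_W W (g t) x * g t x * \<phi>' x)"
proof -
  define Phi where "Phi x = conv_W W (g t) x * g t x" for x
  have Phi_cont: "continuous_on S Phi" for S
    unfolding Phi_def by (intro continuous_intros conv_continuous[OF t R(2)] g_slice_continuous t)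
  have "((\<lambda>x. gt t x * \<phi> x) has_integral - integral {-R..R} (\<lambda>x. Phi x * \<phi>' x)) {-R..R}"
  proof (rule integration_by_parts[OF bounded_bilinear_mult])
    show "- R \<le> R" using R by simp
    show "continuous_on {-R..R} Phi" by (rule Phi_cont)
    show "continuous_on {-R..R} \<phi>"
      using \<phi> by (meson DERIV_continuous continuous_at_imp_continuous_on)
    show "(Phi has_vector_derivative gt t x) (at x)" for x
      using pde[OF t, of x] unfolding Phi_def has_real_derivative_iff_has_vector_derivative .
    show "(\<phi> has_vector_derivative \<phi>' x) (at x)" for x
      using \<phi>[of x] unfolding has_real_derivative_iff_has_vector_derivative .
    have "(\<lambda>x. Phi x * \<phi>' x) integrable_on {-R..R}"
      by (intro integrable_continuous_real continuous_intros Phi_cont continuous_on_subset[OF \<phi>']) auto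
    moreover have "Phi R = 0" "Phi (-R) = 0" using R by (auto simp: Phi_def)
    ultimately show "((\<lambda>x. Phi x * \<phi>' x) has_integral
          Phi R * \<phi> R - Phi (- R) * \<phi> (- R) - - integral {-R..R} (\<lambda>x. Phi x * \<phi>' x)) {-R..R}"
      by (simp add: integrable_integral)
  qed
  then have "integral {-R..R} (\<lambda>x. gt t x * \<phi> x) = - integral {-R..R} (\<lambda>x. Phi x * \<phi>' x)"
    by (rule integral_unique)
  then show ?thesis by (simp add: mult.commute Phi_def)
qed

text \<open>By oddness of \<open>W\<close> the flux term is half the dissipation.\<close>
lemma flux_symmetrised:
  assumes t: "t \<ge> 0" and R: "\<And>x. R \<le> \<bar>x\<bar> \<Longrightarrow> g t x = 0" and \<psi>: "continuous_on UNIV \<psi>"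
  shows "integral {-R..R} (\<lambda>x. conv_W W (g t) x * g t x * \<psi> x) = dissipation \<psi> R t / 2"
proof -
  have inner: "integral {-R..R} (\<lambda>y. \<psi> x * (W (x - y) * g t x * g t y))
      = conv_W W (g t) x * g t x * \<psi> x" for x
  proof -
    have "integral {-R..R} (\<lambda>y. \<psi> x * (W (x - y) * g t x * g t y))
        = integral {-R..R} (\<lambda>y. W (x - y) * g t y * (g t x * \<psi> x))"
      by (rule integral_cong) (simp add: mult_ac)
    also have "\<dots> = integral {-R..R} (\<lambda>y. W (x - y) * g t y) * (g t x * \<psi> x)"
      by (rule integral_mult_left)
    finally show ?thesis by (simp only: conv_on_window[OF t R] mult.assoc)
  qed
  have "dissipation \<psi> R t
      = 2 * integral {-R..R} (\<lambda>x. integral {-R..R} (\<lambda>y. \<psi> x * (W (x - y) * g t x * g t y)))"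
    unfolding dissipation_def
  proof (rule antisymmetric_double_integral[OF interaction_continuous[OF t] \<psi>])
    show "W (y - x) * g t y * g t x = - (W (x - y) * g t x * g t y)" for x y
      using W_odd[of "x - y"] by simp
  qed
  then show ?thesis by (simp only: inner)
qed

lemma weak_formulation:
  assumes T: "\<And>t x. 0 \<le> t \<Longrightarrow> t \<le> T \<Longrightarrow> R \<le> \<bar>x\<bar> \<Longrightarrow> g t x = 0" and R: "R > 0"
    and \<phi>: "\<And>x. (\<phi> has_real_derivative \<phi>' x) (at x)" and \<phi>': "continuous_on UNIV \<phi>'"
    and t: "t \<in> {0..T}"
  shows "((\<lambda>s. integral {-R..R} (\<lambda>x. \<phi> x * g s x)) has_real_derivative
           - dissipation \<phi>' R t / 2) (at t within {0..T})"
proof -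
  have t0: "t \<ge> 0" and Rt: "\<And>x. R \<le> \<bar>x\<bar> \<Longrightarrow> g t x = 0" using T t by auto
  have \<phi>_cont: "continuous_on UNIV \<phi>"
    using \<phi> by (meson DERIV_continuous continuous_at_imp_continuous_on)
  have "integral {-R..R} (\<lambda>x. \<phi> x * gt t x) = - dissipation \<phi>' R t / 2"
    using flux_by_parts[OF t0 R Rt \<phi> \<phi>'] flux_symmetrised[OF t0 Rt \<phi>'] by simp
  then show ?thesis using window_moment_has_derivative[OF \<phi>_cont t, of R] by (simp only:)
qed

lemma moment_decreasing:
  assumes \<phi>: "\<And>x. (\<phi> has_real_derivative \<phi>' x) (at x)" and \<phi>': "continuous_on UNIV \<phi>'"
    and mono: "mono \<phi>'" and T: "0 \<le> T"
  shows "integral UNIV (\<lambda>x. \<phi> x * g T x) \<le> integral UNIV (\<lambda>x. \<phi> x * g 0 x)"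
proof (rule support_radius[of T])
  fix R assume "R > 0" and R: "\<And>t x. 0 \<le> t \<Longrightarrow> t \<le> T \<Longrightarrow> R \<le> \<bar>x\<bar> \<Longrightarrow> g t x = 0"
  have \<phi>_cont: "continuous_on UNIV \<phi>"
    using \<phi> by (meson DERIV_continuous continuous_at_imp_continuous_on)
  have "integral {-R..R} (\<lambda>x. \<phi> x * g T x) \<le> integral {-R..R} (\<lambda>x. \<phi> x * g 0 x)"
    by (rule nonpos_derivative_imp_decreasing[OF T weak_formulation[OF R \<open>R > 0\<close> \<phi> \<phi>']])
       (use dissipation_nonneg[OF mono \<phi>'] in auto)
  then show ?thesis
    using moment_on_window(2)[OF _ _ \<phi>_cont, of T R] moment_on_window(2)[OF _ _ \<phi>_cont, of 0 R] R T
    by simp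
qed

lemma moment_conserved:
  assumes \<phi>: "\<And>x. (\<phi> has_real_derivative k) (at x)" and T: "0 \<le> T"
  shows "integral UNIV (\<lambda>x. \<phi> x * g T x) = integral UNIV (\<lambda>x. \<phi> x * g 0 x)"
proof -
  have "integral UNIV (\<lambda>x. \<phi> x * g T x) \<le> integral UNIV (\<lambda>x. \<phi> x * g 0 x)"
    by (rule moment_decreasing[OF \<phi> _ _ T]) (auto simp: mono_def)
  moreover have "integral UNIV (\<lambda>x. - \<phi> x * g T x) \<le> integral UNIV (\<lambda>x. - \<phi> x * g 0 x)"
    by (rule moment_decreasing[OF DERIV_minus[OF \<phi>] _ _ T]) (auto simp: mono_def)
  ultimately show ?thesis by simp
qed

lemma mass_conserved: "0 \<le> T \<Longrightarrow> integral UNIV (g T) = integral UNIV (g 0)"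
  using moment_conserved[of "\<lambda>x. 1" 0 T] by simp

lemma centred_moment_conserved:
  "0 \<le> T \<Longrightarrow> integral UNIV (\<lambda>x. (x - c) * g T x) = integral UNIV (\<lambda>x. (x - c) * g 0 x)"
  by (rule moment_conserved[of _ 1]) (auto intro!: derivative_eq_intros)

lemma centred_moment_eq:
  assumes "t \<ge> 0"
  shows "integral UNIV (\<lambda>x. (x - c) * g t x) = integral UNIV (\<lambda>x. x * g t x) - c * integral UNIV (g t)"
proof -
  have "integral UNIV (\<lambda>x. (x - c) * g t x) = integral UNIV (\<lambda>x. x * g t x - c * g t x)"
    by (simp add: left_diff_distrib)
  also have "\<dots> = integral UNIV (\<lambda>x. x * g t x) - c * integral UNIV (g t)"
    using integral_diff[OF moment_integrable[OF assms continuous_on_id]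
        integrable_on_mult_right[OF slice_integrable[OF assms]]] by simp
  finally show ?thesis .
qed

lemma vanishes_where_weight_positive:
  assumes \<phi>: "continuous_on UNIV \<phi>" "\<And>x. \<phi> x \<ge> 0"
    and moment: "integral UNIV (\<lambda>x. \<phi> x * g T x) \<le> 0" and T: "0 \<le> T" and x: "\<phi> x > 0"
  shows "g T x = 0"
proof (rule support_radius[of T])
  fix R assume "R > 0" and R: "\<And>t x. 0 \<le> t \<Longrightarrow> t \<le> T \<Longrightarrow> R \<le> \<bar>x\<bar> \<Longrightarrow> g t x = 0"
  show ?thesis
  proof (cases "R \<le> \<bar>x\<bar>")
    case False
    have cont: "continuous_on {-R..R} (\<lambda>x. \<phi> x * g T x)"
      by (intro continuous_intros g_slice_continuous T continuous_on_subset[OF \<phi>(1) subset_UNIV])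
    have nonneg: "0 \<le> \<phi> x * g T x" for x using \<phi>(2) g_nonneg[OF T] by simp
    have "integral {-R..R} (\<lambda>x. \<phi> x * g T x) = 0"
      using moment moment_on_window(2)[OF T _ \<phi>(1), of R] R T
        integral_nonneg[OF integrable_continuous_real[OF cont] nonneg] by simp
    then have "\<phi> x * g T x = 0"
      by (rule integral_zero_imp_zero[OF cont nonneg _ \<open>R > 0\<close>]) (use False in simp)
    then show ?thesis using x by simp
  qed (use R T in auto)
qed

lemma support_confined_by_test:
  assumes \<phi>: "\<And>x. (\<phi> has_real_derivative \<phi>' x) (at x)" and \<phi>': "continuous_on UNIV \<phi>'"
    and mono: "mono \<phi>'" and nonneg: "\<And>x. \<phi> x \<ge> 0" and initial: "\<And>x. \<phi> x * g 0 x = 0"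
    and T: "0 \<le> T" and x: "\<phi> x > 0"
  shows "g T x = 0"
proof -
  have "continuous_on UNIV \<phi>"
    using \<phi> by (meson DERIV_continuous continuous_at_imp_continuous_on)
  moreover have "integral UNIV (\<lambda>x. \<phi> x * g T x) \<le> 0"
    using moment_decreasing[OF \<phi> \<phi>' mono T] initial by simp
  ultimately show ?thesis using vanishes_where_weight_positive[of \<phi>] nonneg T x by blast
qed

lemma support_confined:
  assumes supp0: "\<And>x. x \<notin> {a..b} \<Longrightarrow> g 0 x = 0" and T: "0 \<le> T" and x: "x \<notin> {a..b}"
  shows "g T x = 0"
proof (cases "x > b")
  case True
  show ?thesis
  proof (rule support_confined_by_test[where \<phi>="\<lambda>x. (max (x - b) 0)\<^sup>2" and \<phi>'="\<lambda>x. 2 * max (x - b) 0"])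
    show "((\<lambda>x. (max (x - b) 0)\<^sup>2) has_real_derivative 2 * max (x - b) 0) (at x)" for x
      using DERIV_chain2[OF positive_part_square_deriv, of "\<lambda>x. x - b" 1 x]
      by (simp add: DERIV_diff[OF DERIV_ident DERIV_const, simplified])
    show "mono (\<lambda>x. 2 * max (x - b) (0::real))" by (auto simp: mono_def)
    show "(max (y - b) 0)\<^sup>2 * g 0 y = 0" for y using supp0[of y] by (cases "y > b") auto
  qed (use True T in \<open>auto intro!: continuous_intros\<close>)
next
  case False
  then have "x < a" using x by auto
  show ?thesis
  proof (rule support_confined_by_test[where \<phi>="\<lambda>x. (max (a - x) 0)\<^sup>2" and \<phi>'="\<lambda>x. - (2 * max (a - x) 0)"])
    show "((\<lambda>x. (max (a - x) 0)\<^sup>2) has_real_derivative - (2 * max (a - x) 0)) (at x)" for x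
      using DERIV_chain2[OF positive_part_square_deriv, of "\<lambda>x. a - x" "-1" x]
      by (simp add: DERIV_diff[OF DERIV_const DERIV_ident, simplified])
    show "mono (\<lambda>x. - (2 * max (a - x) (0::real)))" by (auto simp: mono_def)
    show "(max (a - y) 0)\<^sup>2 * g 0 y = 0" for y using supp0[of y] by (cases "y < a") auto
  qed (use \<open>x < a\<close> T in \<open>auto intro!: continuous_intros\<close>)
qed

lemma inertia_dissipation_bound:
  assumes \<kappa>: "\<And>z. \<bar>z\<bar> \<le> b - a \<Longrightarrow> \<kappa> * z\<^sup>2 \<le> z * W z"
    and t: "t \<ge> 0" and supp: "\<And>x. x \<notin> {a..b} \<Longrightarrow> g t x = 0"
    and R: "\<And>x. R \<le> \<bar>x\<bar> \<Longrightarrow> g t x = 0"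
    and centred: "integral UNIV (\<lambda>x. (x - c) * g t x) = 0"
  shows "4 * \<kappa> * integral UNIV (g t) * integral UNIV (\<lambda>x. (x - c)\<^sup>2 * g t x)
       \<le> dissipation (\<lambda>x. 2 * (x - c)) R t"
proof -
  have window: "integral UNIV (\<lambda>x. \<phi> x * g t x) = integral {-R..R} (\<lambda>x. \<phi> x * g t x)"
    if "continuous_on UNIV \<phi>" for \<phi>
    by (rule moment_on_window(2)[OF t R that])
  have pointwise: "2 * \<kappa> * ((x - y)\<^sup>2 * (g t x * g t y))
      \<le> (2 * (x - c) - 2 * (y - c)) * (W (x - y) * g t x * g t y)" for x y
  proof (cases "x \<in> {a..b} \<and> y \<in> {a..b}")
    case True
    then have "\<kappa> * (x - y)\<^sup>2 \<le> (x - y) * W (x - y)" using \<kappa> by auto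
    then have "2 * (\<kappa> * (x - y)\<^sup>2) * (g t x * g t y) \<le> 2 * ((x - y) * W (x - y)) * (g t x * g t y)"
      using g_nonneg[OF t] by (intro mult_right_mono) auto
    then show ?thesis by (simp add: algebra_simps)
  next
    case False
    then have "g t x = 0 \<or> g t y = 0" using supp by auto
    then show ?thesis by auto
  qed
  have "4 * \<kappa> * integral UNIV (g t) * integral UNIV (\<lambda>x. (x - c)\<^sup>2 * g t x)
      = 2 * \<kappa> * integral {-R..R} (\<lambda>x. integral {-R..R} (\<lambda>y. (x - y)\<^sup>2 * (g t x * g t y)))"
    using pair_variance_identity[OF g_slice_continuous[OF t continuous_on_id], of R c]
      window[of "\<lambda>_. 1"] window[of "\<lambda>x. x - c"] window[of "\<lambda>x. (x - c)\<^sup>2"] centred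
    by (simp add: continuous_intros)
  also have "\<dots> = integral {-R..R} (\<lambda>x. integral {-R..R} (\<lambda>y. 2 * \<kappa> * ((x - y)\<^sup>2 * (g t x * g t y))))"
    by simp
  also have "\<dots> \<le> dissipation (\<lambda>x. 2 * (x - c)) R t"
    unfolding dissipation_def
    by (intro double_integral_mono pointwise)
       (simp_all add: split_beta, (intro continuous_intros g_slice_continuous t)+)
  finally show ?thesis .
qed

lemma inertia_decay:
  assumes \<kappa>: "\<And>z. \<bar>z\<bar> \<le> b - a \<Longrightarrow> \<kappa> * z\<^sup>2 \<le> z * W z"
    and supp: "\<And>t x. t \<ge> 0 \<Longrightarrow> x \<notin> {a..b} \<Longrightarrow> g t x = 0"
    and centred: "integral UNIV (\<lambda>x. (x - c) * g 0 x) = 0"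
    and T: "0 \<le> T"
  shows "integral UNIV (\<lambda>x. (x - c)\<^sup>2 * g T x)
      \<le> integral UNIV (\<lambda>x. (x - c)\<^sup>2 * g 0 x) * exp (- (2 * \<kappa> * integral UNIV (g 0)) * T)"
proof (rule support_radius[of T])
  fix R assume "R > 0" and R: "\<And>t x. 0 \<le> t \<Longrightarrow> t \<le> T \<Longrightarrow> R \<le> \<bar>x\<bar> \<Longrightarrow> g t x = 0"
  define m where "m = integral UNIV (g 0)"
  define Q where "Q t = integral {-R..R} (\<lambda>x. (x - c)\<^sup>2 * g t x)" for t
  have cont: "continuous_on UNIV (\<lambda>x::real. (x - c)\<^sup>2)" by (intro continuous_intros)
  have window: "integral UNIV (\<lambda>x. (x - c)\<^sup>2 * g t x) = Q t" if "t \<in> {0..T}" for t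
    unfolding Q_def using moment_on_window(2)[OF _ _ cont, of t R] R that by auto
  have "Q T \<le> Q 0 * exp (- (2 * \<kappa> * m) * T)"
  proof (rule gronwall_decay[OF T])
    fix t assume t: "t \<in> {0..T}"
    show "(Q has_real_derivative - dissipation (\<lambda>x. 2 * (x - c)) R t / 2) (at t within {0..T})"
      unfolding Q_def[abs_def]
      by (rule weak_formulation[OF R \<open>R > 0\<close> _ _ t]) (auto intro!: derivative_eq_intros continuous_intros)
    have t0: "t \<ge> 0" and Rt: "\<And>x. R \<le> \<bar>x\<bar> \<Longrightarrow> g t x = 0" using t R by auto
    have "integral UNIV (\<lambda>x. (x - c) * g t x) = 0"
      using centred_moment_conserved[OF t0, of c] centred by simp
    then have "4 * \<kappa> * m * Q t \<le> dissipation (\<lambda>x. 2 * (x - c)) R t"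
      using inertia_dissipation_bound[where a=a and b=b and R=R and c=c, OF \<kappa> t0 supp[OF t0] Rt] mass_conserved[OF t0] window[OF t]
      by (simp add: m_def)
    then show "- dissipation (\<lambda>x. 2 * (x - c)) R t / 2 \<le> - (2 * \<kappa> * m) * Q t"
      by simp
  qed
  then show ?thesis using window[of T] window[of 0] T by (simp add: m_def)
qed

lemma moment_deviation_bound:
  assumes t: "t \<ge> 0" and supp: "\<And>x. x \<notin> {a..b} \<Longrightarrow> g t x = 0"
    and centred: "integral UNIV (\<lambda>x. (x - c) * g t x) = 0" and h: "continuous_on UNIV h"
    and taylor: "\<And>x. x \<in> {a..b} \<Longrightarrow> \<bar>h x - h c - d * (x - c)\<bar> \<le> M * (x - c)\<^sup>2"
  shows "\<bar>integral UNIV (\<lambda>x. h x * g t x) - integral UNIV (g t) * h c\<bar>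
       \<le> M * integral UNIV (\<lambda>x. (x - c)\<^sup>2 * g t x)"
proof -
  define E where "E x = h x - h c - d * (x - c)" for x
  have int_h: "(\<lambda>x. h x * g t x) integrable_on UNIV"
    and int_c: "(\<lambda>x. h c * g t x) integrable_on UNIV"
    and int_d: "(\<lambda>x. d * ((x - c) * g t x)) integrable_on UNIV"
    and int_sq: "(\<lambda>x. M * ((x - c)\<^sup>2 * g t x)) integrable_on UNIV"
    by (intro integrable_on_mult_right moment_integrable[OF t] h continuous_intros)+
  have "integral UNIV (\<lambda>x. E x * g t x)
      = integral UNIV (\<lambda>x. h x * g t x - h c * g t x - d * ((x - c) * g t x))"
    by (simp add: E_def algebra_simps)
  also have "\<dots> = integral UNIV (\<lambda>x. h x * g t x) - integral UNIV (g t) * h c"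
    using integral_diff[OF integrable_diff[OF int_h int_c] int_d] integral_diff[OF int_h int_c] centred
    by (simp add: mult.commute)
  finally have deviation: "integral UNIV (\<lambda>x. h x * g t x) - integral UNIV (g t) * h c
      = integral UNIV (\<lambda>x. E x * g t x)" ..
  have "norm (integral UNIV (\<lambda>x. E x * g t x)) \<le> integral UNIV (\<lambda>x. M * ((x - c)\<^sup>2 * g t x))"
  proof (rule integral_norm_bound_integral[OF _ int_sq])
    show "(\<lambda>x. E x * g t x) integrable_on UNIV"
      unfolding E_def by (intro moment_integrable[OF t] h continuous_intros)
    fix x
    show "norm (E x * g t x) \<le> M * ((x - c)\<^sup>2 * g t x)"
    proof (cases "x \<in> {a..b}")
      case True
      then have "\<bar>E x\<bar> * g t x \<le> M * (x - c)\<^sup>2 * g t x"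
        using taylor g_nonneg[OF t] by (intro mult_right_mono) (auto simp: E_def)
      then show ?thesis using g_nonneg[OF t, of x] by (simp add: abs_mult mult.assoc)
    qed (use supp in simp)
  qed
  then show ?thesis using deviation by simp
qed

lemma concentration:
  assumes \<kappa>: "\<kappa> > 0" "\<And>z. \<bar>z\<bar> \<le> b - a \<Longrightarrow> \<kappa> * z\<^sup>2 \<le> z * W z"
    and supp0: "\<And>x. x \<notin> {a..b} \<Longrightarrow> g 0 x = 0"
    and centre: "integral UNIV (g 0) * c = integral UNIV (\<lambda>x. x * g 0 x)"
    and h1: "\<And>x. h differentiable (at x)" and h2: "\<And>x. deriv h differentiable (at x)"
    and h3: "continuous_on UNIV (deriv (deriv h))"
  shows "((\<lambda>t. integral UNIV (\<lambda>x. h x * g t x)) \<longlongrightarrow> integral UNIV (g 0) * h c) at_top"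
proof -
  define m where "m = integral UNIV (g 0)"
  define I where "I t = integral UNIV (\<lambda>x. (x - c)\<^sup>2 * g t x)" for t
  have supp: "\<And>t x. t \<ge> 0 \<Longrightarrow> x \<notin> {a..b} \<Longrightarrow> g t x = 0"
    using support_confined[OF supp0] by blast
  have centred: "integral UNIV (\<lambda>x. (x - c) * g t x) = 0" if "t \<ge> 0" for t
    using centred_moment_conserved[OF that] centred_moment_eq[of 0 c] centre by (simp add: mult.commute)
  obtain M where "M \<ge> 0" and M: "\<And>x y. x \<in> {min a c..max b c} \<Longrightarrow> y \<in> {min a c..max b c} \<Longrightarrow>
      \<bar>h x - h y - deriv h y * (x - y)\<bar> \<le> M * (x - y)\<^sup>2"
    using taylor_quadratic_bound[OF h1 h2 h3, of "min a c" "max b c"] by blast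
  have h_cont: "continuous_on UNIV h"
    using h1 by (meson continuous_at_imp_continuous_on differentiable_imp_continuous_within)
  have bound: "\<bar>integral UNIV (\<lambda>x. h x * g t x) - m * h c\<bar> \<le> M * I 0 * exp (- (2 * \<kappa> * m) * t)"
    if "t \<ge> 0" for t
  proof -
    have taylor: "\<bar>h x - h c - deriv h c * (x - c)\<bar> \<le> M * (x - c)\<^sup>2" if "x \<in> {a..b}" for x
      using M[of x c] that by (auto simp: min_def max_def)
    have "\<bar>integral UNIV (\<lambda>x. h x * g t x) - integral UNIV (g t) * h c\<bar> \<le> M * I t"
      unfolding I_def using \<open>t \<ge> 0\<close> supp[OF \<open>t \<ge> 0\<close>] centred[OF \<open>t \<ge> 0\<close>] h_cont taylor
      by (rule moment_deviation_bound)
    then have "\<bar>integral UNIV (\<lambda>x. h x * g t x) - m * h c\<bar> \<le> M * I t"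
      using mass_conserved[OF that] by (simp add: m_def)
    also have "\<dots> \<le> M * (I 0 * exp (- (2 * \<kappa> * m) * t))"
      using inertia_decay[where a=a and b=b and c=c, OF \<kappa>(2) supp centred[of 0] that] \<open>M \<ge> 0\<close>
      by (intro mult_left_mono) (auto simp: I_def m_def)
    finally show ?thesis by simp
  qed
  have m_nonneg: "m \<ge> 0"
    unfolding m_def by (rule integral_nonneg[OF slice_integrable]) (auto intro: g_nonneg)
  have "((\<lambda>t. M * I 0 * exp (- (2 * \<kappa> * m) * t)) \<longlongrightarrow> 0) at_top"
  proof (cases "m = 0")
    case True
    have "g 0 x = 0" for x
      by (rule vanishes_where_weight_positive[of "\<lambda>_. 1"]) (use True in \<open>auto simp: m_def\<close>)
    then show ?thesis by (simp add: I_def)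
  next
    case False
    have exp_decay: "((\<lambda>t. exp (- k * t)) \<longlongrightarrow> 0) at_top" if "k > 0" for k :: real
      using that by real_asymp
    have "2 * \<kappa> * m > 0" using False m_nonneg \<kappa>(1) by simp
    then show ?thesis by (intro tendsto_mult_right_zero exp_decay)
  qed
  moreover have "\<forall>\<^sub>F t in at_top.
      norm (integral UNIV (\<lambda>x. h x * g t x) - m * h c) \<le> M * I 0 * exp (- (2 * \<kappa> * m) * t)"
    using eventually_ge_at_top[of "0::real"] by eventually_elim (use bound in simp)
  ultimately have "((\<lambda>t. integral UNIV (\<lambda>x. h x * g t x) - m * h c) \<longlongrightarrow> 0) at_top"
    by (rule Lim_null_comparison[rotated])
  then show ?thesis by (simp add: LIM_zero_iff m_def)
qed

end

theorem mainTheorem13: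
  fixes W :: "real \<Rightarrow> real"
    and g gt gx :: "real \<Rightarrow> real \<Rightarrow> real"
    and a b :: real
  assumes W_odd: "\<And>x. W (- x) = - W x"
    and W_diff: "\<And>x. W differentiable (at x)"
    and W_C1: "continuous_on UNIV (deriv W)"
    and W'_pos: "deriv W 0 > 0"
    and W_pos: "\<And>x. x > 0 \<Longrightarrow> W x > 0"
    and g_nonneg: "\<And>t x. t \<ge> 0 \<Longrightarrow> g t x \<ge> 0"
    and g_dt: "\<And>t x. t \<ge> 0 \<Longrightarrow> ((\<lambda>s. g s x) has_real_derivative gt t x) (at t within {0..})"
    and g_dx: "\<And>t x. t \<ge> 0 \<Longrightarrow> ((\<lambda>y. g t y) has_real_derivative gx t x) (at x)"
    and g_cont: "continuous_on ({0..} \<times> UNIV) (\<lambda>(t, x). g t x)"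
    and gt_cont: "continuous_on ({0..} \<times> UNIV) (\<lambda>(t, x). gt t x)"
    and gx_cont: "continuous_on ({0..} \<times> UNIV) (\<lambda>(t, x). gx t x)"
    and g_decay: "\<And>T. \<exists>R. \<forall>t x. 0 \<le> t \<and> t \<le> T \<and> \<bar>x\<bar> > R \<longrightarrow> g t x = 0"
    and pde: "\<And>t x. t \<ge> 0 \<Longrightarrow>
               ((\<lambda>y. conv_W W (g t) y * g t y) has_real_derivative gt t x) (at x)"
    and supp0: "\<And>x. x \<notin> {a..b} \<Longrightarrow> g 0 x = 0"
  shows "(\<forall>t>0. \<forall>x. x \<notin> {a..b} \<longrightarrow> g t x = 0)
       \<and> (\<forall>c h. integral UNIV (g 0) * c = integral UNIV (\<lambda>x. x * g 0 x)
              \<and> (\<forall>x. h differentiable (at x))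
              \<and> (\<forall>x. deriv h differentiable (at x))
              \<and> continuous_on UNIV (deriv (deriv h))
            \<longrightarrow> ((\<lambda>t. integral UNIV (\<lambda>x. h x * g t x))
                   \<longlongrightarrow> integral UNIV (g 0) * h c) at_top)"
proof -
  have "continuous_on UNIV W"
    using W_diff by (meson continuous_at_imp_continuous_on differentiable_imp_continuous_within)
  then interpret aggregation_solution W g gt
    by unfold_locales (use W_odd W_pos g_nonneg g_dt g_cont gt_cont g_decay pde in auto)
  obtain \<kappa> where "\<kappa> > 0" and \<kappa>: "\<And>z. \<bar>z\<bar> \<le> \<bar>b - a\<bar> \<Longrightarrow> \<kappa> * z\<^sup>2 \<le> z * W z"
    using odd_kernel_coercive[OF W_odd W_diff W'_pos W_pos abs_ge_zero] by blast
  have "\<kappa> * z\<^sup>2 \<le> z * W z" if "\<bar>z\<bar> \<le> b - a" for z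
    using \<kappa> that by simp
  then have converges: "((\<lambda>t. integral UNIV (\<lambda>x. h x * g t x)) \<longlongrightarrow> integral UNIV (g 0) * h c) at_top"
    if "integral UNIV (g 0) * c = integral UNIV (\<lambda>x. x * g 0 x)" "\<forall>x. h differentiable (at x)"
      "\<forall>x. deriv h differentiable (at x)" "continuous_on UNIV (deriv (deriv h))" for c h
    using concentration[OF \<open>\<kappa> > 0\<close> _ supp0] that by blast
  show ?thesis
    using support_confined[OF supp0] converges by (auto simp: less_imp_le)
qed

end
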